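(* Let $\gamma>0$, let $S=(S_1,\ldots,S_n)$ be nonnegative (positive semi-definite) nonzero symmetric $p\times p$ matrices, and let $f:\mathcal D_n^+\to\mathcal D_n^+$ be a stable mapping with Lipschitz parameter $\lambda_f$ for $d_s$ (i.e. $d_s(f(\Delta),f(\Delta'))\le\lambda_f d_s(\Delta,\Delta')$ for all $\Delta,\Delta'$). If $f$ is bounded from above (there is $f_0$ with $f(\Delta)\le f_0$ for all $\Delta$) or $\lambda_f<1$, then the equation $\Delta=I^S(f(\Delta))$ admits a unique solution $\Delta\in\mathcal D_n^+$.
   Context: $\mathcal D_n^+$ is the set of $n\times n$ diagonal matrices with positive diagonal entries; $d_s(\Delta,\Delta')=\max_i\frac{|\Delta_i-\Delta'_i|}{\sqrt{\Delta_i\Delta'_i}}$; $f$ is stable if it is $1$-Lipschitz for $d_s$. For $\Delta\in\mathcal D_n^+$, $Q_\gamma(S,\Delta)=\big(\frac1n\sum_{i=1}^n\Delta_iS_i+\gamma I_p\big)^{-1}$ and $I^S(\Delta)=\mathrm{diag}\big(\frac1n\operatorname{tr}(S_iQ_\gamma(S,\Delta))\big)_{1\le i\le n}$. *)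

theory Defs
  imports "HOL-Analysis.Analysis"
begin

text \<open>A diagonal matrix Delta in D_n^+ is represented by its diagonal vector,
  indexed by the finite type 'n (n = CARD('n)).\<close>

definition posdiag :: "real^'n \<Rightarrow> bool" where
  "posdiag D \<longleftrightarrow> (\<forall>i. 0 < D $ i)"

definition d_s :: "real^'n::finite \<Rightarrow> real^'n \<Rightarrow> real" where
  "d_s D D' = Max (range (\<lambda>i. \<bar>D $ i - D' $ i\<bar> / sqrt (D $ i * D' $ i)))"

definition lipschitz_ds :: "real \<Rightarrow> (real^'n::finite \<Rightarrow> real^'n) \<Rightarrow> bool" where
  "lipschitz_ds lam f \<longleftrightarrow>
     (\<forall>D D'. posdiag D \<longrightarrow> posdiag D' \<longrightarrow> d_s (f D) (f D') \<le> lam * d_s D D')"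

definition stable :: "(real^'n::finite \<Rightarrow> real^'n) \<Rightarrow> bool" where
  "stable f \<longleftrightarrow> lipschitz_ds 1 f"

definition psd_matrix :: "real^'p^'p \<Rightarrow> bool" where
  "psd_matrix A \<longleftrightarrow> (\<forall>x. 0 \<le> x \<bullet> (A *v x))"

definition symmetric_matrix :: "real^'p^'p \<Rightarrow> bool" where
  "symmetric_matrix A \<longleftrightarrow> transpose A = A"

definition Q_gamma :: "real \<Rightarrow> ('n::finite \<Rightarrow> real^'p^'p) \<Rightarrow> real^'n \<Rightarrow> real^'p^'p" where
  "Q_gamma \<gamma> S D =
     matrix_inv ((1 / real CARD('n)) *\<^sub>R (\<Sum>i\<in>UNIV. (D $ i) *\<^sub>R S i) + \<gamma> *\<^sub>R mat 1)"

definition I_S :: "real \<Rightarrow> ('n::finite \<Rightarrow> real^'p::finite^'p) \<Rightarrow> real^'n \<Rightarrow> real^'n" where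
  "I_S \<gamma> S D = (\<chi> i. (1 / real CARD('n)) * trace (S i ** Q_gamma \<gamma> S D))"

end

(*
  Write phi X = (X - 1) / sqrt X, so that d_s(a, b) = phi (max (a / b) (b / a)), and
  c = (X m + gamma) / (m + gamma).  If Delta' <= X Delta entrywise and m bounds the quadratic
  form of (1/n) sum_i Delta_i S_i, then (1/n) sum_i Delta'_i S_i + gamma I <= c ((1/n) sum_i Delta_i S_i
  + gamma I) in the Loewner order; inversion reverses this, and taking traces against S_i >= 0 gives
  I^S(Delta) <= c I^S(Delta').  As phi c <= sqrt (m / (m + gamma)) phi X, the map I^S contracts d_s
  by the factor sqrt (m / (m + gamma)) wherever the weights stay bounded; in particular it is stable.
  So I^S o f is a d_s-contraction: with a uniform m if f is bounded, and with factor lambda_f if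
  lambda_f < 1.  Although d_s violates the triangle inequality it dominates |ln a - ln b|, so the
  iterates of a d_s-contraction converge geometrically in logarithmic coordinates, to its unique
  fixed point.  Positivity of traces against S_i uses an orthonormal eigenbasis of S_i, obtained by
  maximising the Rayleigh quotient on orthogonal complements.
*)

theory Submission
  imports Defs
begin

section \<open>Spectral decomposition of symmetric matrices\<close>

lemma symmetric_matrix_inner_commute:
  fixes A :: "real^'p::finite^'p"
  assumes "symmetric_matrix A"
  shows "x \<bullet> (A *v y) = (A *v x) \<bullet> y"
  using assms unfolding symmetric_matrix_def by (metis dot_lmul_matrix transpose_matrix_vector)

lemma linear_coeff_eq_0_if_quadratic_nonpos:
  fixes b c :: real
  assumes nonpos: "\<And>t. b * t + c * t\<^sup>2 \<le> 0"
  shows "b = 0"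
proof (rule ccontr)
  assume "b \<noteq> 0"
  define s where "s = 1 / (\<bar>c\<bar> + 1)"
  have "s > 0" unfolding s_def by simp
  moreover have "1 + c * s > 0"
    unfolding s_def by (simp add: field_simps)
  ultimately have "0 < s * b\<^sup>2 * (1 + c * s)"
    using \<open>b \<noteq> 0\<close> by simp
  also have "\<dots> = b * (s * b) + c * (s * b)\<^sup>2"
    by (simp add: power2_eq_square algebra_simps)
  finally show False
    using nonpos[of "s * b"] by simp
qed

lemma subspace_rayleigh_max:
  fixes A :: "real^'p::finite^'p"
  assumes W: "subspace W" and "x0 \<in> W" "x0 \<noteq> 0"
  obtains v where "v \<in> W" "v \<bullet> v = 1" "\<And>y. y \<in> W \<Longrightarrow> y \<bullet> (A *v y) \<le> (v \<bullet> (A *v v)) * (y \<bullet> y)"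
proof -
  define K where "K = W \<inter> sphere 0 1"
  have "closed W"
    using W closed_subspace by blast
  then have "compact K"
    unfolding K_def by (simp add: closed_Int_compact)
  moreover have "x0 /\<^sub>R norm x0 \<in> K"
    unfolding K_def using subspace_scale[OF W \<open>x0 \<in> W\<close>] \<open>x0 \<noteq> 0\<close> by simp
  moreover have "continuous_on K (\<lambda>x. x \<bullet> (A *v x))"
    by (intro continuous_intros)
  ultimately obtain v where "v \<in> K" and v_max: "\<And>y. y \<in> K \<Longrightarrow> y \<bullet> (A *v y) \<le> v \<bullet> (A *v v)"
    using continuous_attains_sup[of K "\<lambda>x. x \<bullet> (A *v x)"] by blast
  have "y \<bullet> (A *v y) \<le> (v \<bullet> (A *v v)) * (y \<bullet> y)" if "y \<in> W" for y
  proof (cases "y = 0")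
    case False
    then have "y /\<^sub>R norm y \<in> K"
      unfolding K_def using subspace_scale[OF W \<open>y \<in> W\<close>] by simp
    then have "(y /\<^sub>R norm y) \<bullet> (A *v (y /\<^sub>R norm y)) \<le> v \<bullet> (A *v v)"
      by (rule v_max)
    moreover have "(y /\<^sub>R norm y) \<bullet> (A *v (y /\<^sub>R norm y)) = (y \<bullet> (A *v y)) / (norm y)\<^sup>2"
      by (simp add: matrix_vector_mult_scaleR power2_eq_square divide_inverse)
    ultimately show ?thesis
      using False by (simp add: divide_le_eq dot_square_norm)
  qed simp
  moreover have "v \<in> W" "v \<bullet> v = 1"
    using \<open>v \<in> K\<close> unfolding K_def by (simp_all add: dot_square_norm)
  ultimately show thesis
    using that by blast
qed

text \<open>Perturbing \<open>v\<close> to \<open>v + t w\<close> with \<open>w = A v - l v \<in> W\<close>, maximality of the Rayleigh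
  quotient gives \<open>2 t |w|\<^sup>2 + O(t\<^sup>2) \<le> 0\<close> for all \<open>t\<close>, hence \<open>w = 0\<close>.\<close>

lemma rayleigh_maximizer_eigenvector:
  fixes A :: "real^'p::finite^'p"
  assumes sym: "symmetric_matrix A" and W: "subspace W" and invariant: "\<And>y. y \<in> W \<Longrightarrow> A *v y \<in> W"
    and "v \<in> W" "v \<bullet> v = 1"
    and rayleigh: "\<And>y. y \<in> W \<Longrightarrow> y \<bullet> (A *v y) \<le> (v \<bullet> (A *v v)) * (y \<bullet> y)"
  shows "A *v v = (v \<bullet> (A *v v)) *\<^sub>R v"
proof -
  define l where "l = v \<bullet> (A *v v)"
  define w where "w = A *v v - l *\<^sub>R v"
  have "w \<in> W"
    unfolding w_def using W invariant \<open>v \<in> W\<close> by (simp add: subspace_diff subspace_scale)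
  have "v \<bullet> w = 0"
    unfolding w_def l_def using \<open>v \<bullet> v = 1\<close> by (simp add: inner_diff_right)
  have "w \<bullet> (A *v v) = w \<bullet> w"
    unfolding w_def using \<open>v \<bullet> w = 0\<close> \<open>v \<bullet> v = 1\<close> l_def
    by (simp add: inner_diff_left inner_diff_right inner_commute)
  moreover have "v \<bullet> (A *v w) = w \<bullet> (A *v v)"
    using symmetric_matrix_inner_commute[OF sym, of v w] by (simp add: inner_commute)
  ultimately have "2 * (w \<bullet> w) * t + (w \<bullet> (A *v w) - l * (w \<bullet> w)) * t\<^sup>2 \<le> 0" for t
  proof -
    have "v + t *\<^sub>R w \<in> W"
      using W \<open>v \<in> W\<close> \<open>w \<in> W\<close> by (simp add: subspace_add subspace_scale)
    then have le: "(v + t *\<^sub>R w) \<bullet> (A *v (v + t *\<^sub>R w)) \<le> l * ((v + t *\<^sub>R w) \<bullet> (v + t *\<^sub>R w))"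
      unfolding l_def by (rule rayleigh)
    have quad: "(v + t *\<^sub>R w) \<bullet> (A *v (v + t *\<^sub>R w)) = l + 2 * t * (w \<bullet> w) + t\<^sup>2 * (w \<bullet> (A *v w))"
      using \<open>w \<bullet> (A *v v) = w \<bullet> w\<close> \<open>v \<bullet> (A *v w) = w \<bullet> (A *v v)\<close> unfolding l_def
      by (simp add: matrix_vector_right_distrib matrix_vector_mult_scaleR inner_add_left
          inner_add_right power2_eq_square algebra_simps)
    have norm: "(v + t *\<^sub>R w) \<bullet> (v + t *\<^sub>R w) = 1 + t\<^sup>2 * (w \<bullet> w)"
      using \<open>v \<bullet> w = 0\<close> \<open>v \<bullet> v = 1\<close>
      by (simp add: inner_add_left inner_add_right inner_commute power2_eq_square)
    from le have "l + 2 * t * (w \<bullet> w) + t\<^sup>2 * (w \<bullet> (A *v w)) \<le> l * (1 + t\<^sup>2 * (w \<bullet> w))"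
      unfolding quad norm .
    then show ?thesis
      by (simp add: algebra_simps)
  qed
  then have "2 * (w \<bullet> w) = 0"
    by (rule linear_coeff_eq_0_if_quadratic_nonpos)
  then show ?thesis
    unfolding w_def l_def by simp
qed

lemma symmetric_matrix_eigenvector_orthogonal:
  fixes A :: "real^'p::finite^'p"
  assumes sym: "symmetric_matrix A" and "finite B" and "card B < CARD('p)"
    and eigen: "\<And>b. b \<in> B \<Longrightarrow> \<exists>l. A *v b = l *\<^sub>R b"
  obtains v where "norm v = 1" "\<And>b. b \<in> B \<Longrightarrow> orthogonal v b" "A *v v = (v \<bullet> (A *v v)) *\<^sub>R v"
proof -
  define W where "W = {x. \<forall>b\<in>B. orthogonal x b}"
  have W: "subspace W"
    unfolding W_def subspace_def orthogonal_def by (auto simp: inner_add_left)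
  have dim: "dim B < DIM(real^'p)"
    using dim_le_card[of B B] assms(2,3) by (simp add: span_superset)
  obtain x0 where "x0 \<noteq> 0" and x0_orth: "\<And>y. y \<in> span B \<Longrightarrow> orthogonal x0 y"
    using orthogonal_to_subspace_exists[OF dim] by metis
  have "x0 \<in> W"
    unfolding W_def using x0_orth[OF span_base] by blast
  have invariant: "A *v y \<in> W" if "y \<in> W" for y
  proof -
    have "orthogonal (A *v y) b" if "b \<in> B" for b
    proof -
      obtain lb where "A *v b = lb *\<^sub>R b"
        using eigen \<open>b \<in> B\<close> by blast
      then have "(A *v y) \<bullet> b = lb * (y \<bullet> b)"
        using symmetric_matrix_inner_commute[OF sym, of y b] by simp
      then show ?thesis
        using \<open>y \<in> W\<close> \<open>b \<in> B\<close> unfolding W_def orthogonal_def by simp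
    qed
    then show ?thesis
      unfolding W_def by blast
  qed
  obtain v where "v \<in> W" "v \<bullet> v = 1"
    and rayleigh: "\<And>y. y \<in> W \<Longrightarrow> y \<bullet> (A *v y) \<le> (v \<bullet> (A *v v)) * (y \<bullet> y)"
    using subspace_rayleigh_max[OF W \<open>x0 \<in> W\<close> \<open>x0 \<noteq> 0\<close>] by blast
  have "A *v v = (v \<bullet> (A *v v)) *\<^sub>R v"
    by (rule rayleigh_maximizer_eigenvector[OF sym W invariant \<open>v \<in> W\<close> \<open>v \<bullet> v = 1\<close> rayleigh])
  then show thesis
    using that[of v] \<open>v \<in> W\<close> \<open>v \<bullet> v = 1\<close> unfolding W_def by (simp add: norm_eq_1)
qed

lemma symmetric_matrix_orthonormal_eigenvectors:
  fixes A :: "real^'p::finite^'p"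
  assumes sym: "symmetric_matrix A"
  shows "k \<le> CARD('p) \<Longrightarrow> \<exists>B. finite B \<and> card B = k \<and> pairwise orthogonal B \<and>
    (\<forall>b\<in>B. norm b = 1 \<and> A *v b = (b \<bullet> (A *v b)) *\<^sub>R b)"
proof (induction k)
  case 0
  show ?case
    by (intro exI[of _ "{}"]) simp
next
  case (Suc k)
  then obtain B where B: "finite B" "card B = k" "pairwise orthogonal B"
    and unit_eigen: "\<forall>b\<in>B. norm b = 1 \<and> A *v b = (b \<bullet> (A *v b)) *\<^sub>R b"
    by auto
  have "card B < CARD('p)"
    using Suc.prems B(2) by simp
  moreover have "\<exists>l. A *v b = l *\<^sub>R b" if "b \<in> B" for b
    using unit_eigen that by blast
  ultimately obtain v where "norm v = 1" and v_orth: "\<And>b. b \<in> B \<Longrightarrow> orthogonal v b"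
    and "A *v v = (v \<bullet> (A *v v)) *\<^sub>R v"
    using symmetric_matrix_eigenvector_orthogonal[OF sym \<open>finite B\<close>] by metis
  moreover have "v \<notin> B"
    using v_orth \<open>norm v = 1\<close> by (metis norm_zero orthogonal_self zero_neq_one)
  moreover have "pairwise orthogonal (insert v B)"
    using B(3) v_orth by (auto simp: pairwise_insert orthogonal_commute)
  ultimately show ?case
    using B unit_eigen \<open>norm v = 1\<close> by (intro exI[of _ "insert v B"]) auto
qed

lemma symmetric_matrix_eigenbasis:
  fixes A :: "real^'p::finite^'p"
  assumes "symmetric_matrix A"
  obtains B where "finite B" "span B = UNIV" "pairwise orthogonal B" "\<And>b. b \<in> B \<Longrightarrow> norm b = 1"
    "\<And>b. b \<in> B \<Longrightarrow> A *v b = (b \<bullet> (A *v b)) *\<^sub>R b"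
proof -
  obtain B where B: "finite B" "card B = CARD('p)" "pairwise orthogonal B"
    and unit_eigen: "\<forall>b\<in>B. norm b = 1 \<and> A *v b = (b \<bullet> (A *v b)) *\<^sub>R b"
    using symmetric_matrix_orthonormal_eigenvectors[OF assms order.refl] by blast
  have "independent B"
    using B(3) unit_eigen by (intro pairwise_orthogonal_independent) auto
  then have "span B = UNIV"
    using card_eq_dim[of B UNIV] B(1,2) by auto
  with B unit_eigen that show thesis
    by blast
qed

section \<open>Traces against positive semidefinite matrices\<close>

lemma trace_eq_sum_orthonormal_basis:
  fixes M :: "real^'p::finite^'p"
  assumes "finite B" "span B = UNIV" "pairwise orthogonal B" "\<And>b. b \<in> B \<Longrightarrow> norm b = 1"
  shows "trace M = (\<Sum>b\<in>B. b \<bullet> (M *v b))"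
proof -
  have delta: "(\<Sum>b\<in>B. b $ j * b $ i) = (if i = j then 1 else 0)" for i j
  proof -
    have "(\<Sum>b\<in>B. (axis j 1 \<bullet> b) *\<^sub>R b) = axis j 1"
      using assms by (intro orthonormal_basis_expand) auto
    then have "(\<Sum>b\<in>B. (axis j 1 \<bullet> b) *\<^sub>R b) $ i = axis j 1 $ i"
      by simp
    then show ?thesis
      by (simp add: inner_axis' del: sum_component) (auto simp: axis_def)
  qed
  have "(\<Sum>b\<in>B. b \<bullet> (M *v b)) = (\<Sum>b\<in>B. \<Sum>i\<in>UNIV. \<Sum>j\<in>UNIV. M $ i $ j * (b $ j * b $ i))"
    by (simp add: inner_vec_def matrix_vector_mult_def sum_distrib_left mult_ac)
  also have "\<dots> = (\<Sum>i\<in>UNIV. \<Sum>j\<in>UNIV. M $ i $ j * (\<Sum>b\<in>B. b $ j * b $ i))"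
    by (simp add: sum_distrib_left sum.swap[of _ B])
  also have "\<dots> = trace M"
    by (simp add: delta trace_def if_distrib[of "\<lambda>x. _ * x"] cong: if_cong)
  finally show ?thesis ..
qed

lemma trace_mult_eq_sum_eigenbasis:
  fixes S X :: "real^'p::finite^'p"
  assumes sym: "symmetric_matrix S" and B: "finite B" "span B = UNIV" "pairwise orthogonal B"
    "\<And>b. b \<in> B \<Longrightarrow> norm b = 1"
    and eigen: "\<And>b. b \<in> B \<Longrightarrow> S *v b = (b \<bullet> (S *v b)) *\<^sub>R b"
  shows "trace (S ** X) = (\<Sum>b\<in>B. (b \<bullet> (S *v b)) * (b \<bullet> (X *v b)))"
proof -
  have "trace (S ** X) = (\<Sum>b\<in>B. b \<bullet> (S *v (X *v b)))"
    using trace_eq_sum_orthonormal_basis[OF B] by (simp add: matrix_vector_mul_assoc)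
  also have "\<dots> = (\<Sum>b\<in>B. (S *v b) \<bullet> (X *v b))"
    by (simp add: symmetric_matrix_inner_commute[OF sym])
  also have "\<dots> = (\<Sum>b\<in>B. (b \<bullet> (S *v b)) * (b \<bullet> (X *v b)))"
    by (rule sum.cong[OF refl]) (subst eigen, simp_all)
  finally show ?thesis .
qed

lemma trace_mult_nonneg:
  fixes S X :: "real^'p::finite^'p"
  assumes sym: "symmetric_matrix S" and "psd_matrix S" and X: "\<And>x. 0 \<le> x \<bullet> (X *v x)"
  shows "0 \<le> trace (S ** X)"
proof -
  obtain B where B: "finite B" "span B = UNIV" "pairwise orthogonal B" "\<And>b. b \<in> B \<Longrightarrow> norm b = 1"
    and eigen: "\<And>b. b \<in> B \<Longrightarrow> S *v b = (b \<bullet> (S *v b)) *\<^sub>R b"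
    using symmetric_matrix_eigenbasis[OF sym] by blast
  have "0 \<le> (\<Sum>b\<in>B. (b \<bullet> (S *v b)) * (b \<bullet> (X *v b)))"
    using \<open>psd_matrix S\<close> X unfolding psd_matrix_def by (simp add: sum_nonneg)
  then show ?thesis
    by (simp add: trace_mult_eq_sum_eigenbasis[OF sym B eigen])
qed

lemma trace_mult_pos:
  fixes S X :: "real^'p::finite^'p"
  assumes sym: "symmetric_matrix S" and "psd_matrix S" "S \<noteq> 0"
    and X: "\<And>x. x \<noteq> 0 \<Longrightarrow> 0 < x \<bullet> (X *v x)"
  shows "0 < trace (S ** X)"
proof -
  obtain B where B: "finite B" "span B = UNIV" "pairwise orthogonal B" "\<And>b. b \<in> B \<Longrightarrow> norm b = 1"
    and eigen: "\<And>b. b \<in> B \<Longrightarrow> S *v b = (b \<bullet> (S *v b)) *\<^sub>R b"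
    using symmetric_matrix_eigenbasis[OF sym] by blast
  have "\<exists>b\<in>B. S *v b \<noteq> 0"
  proof (rule ccontr)
    assume "\<not> ?thesis"
    then have "S *v x = 0" for x
        using linear_eq_0_on_span[OF matrix_vector_mul_linear, where b=B and x=x] \<open>span B = UNIV\<close> by auto
    then show False
      using \<open>S \<noteq> 0\<close> matrix_eq[of S 0] by simp
  qed
  then obtain b0 where "b0 \<in> B" "S *v b0 \<noteq> 0" ..
  then have "b0 \<bullet> (S *v b0) \<noteq> 0"
    using eigen[of b0] by force
  then have "0 < b0 \<bullet> (S *v b0)"
    using \<open>psd_matrix S\<close> unfolding psd_matrix_def by (simp add: order_less_le)
  moreover have "b0 \<noteq> 0"
    using B(4)[OF \<open>b0 \<in> B\<close>] by auto
  then have "0 < b0 \<bullet> (X *v b0)"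
    by (rule X)
  ultimately have "0 < (b0 \<bullet> (S *v b0)) * (b0 \<bullet> (X *v b0))"
    by simp
  moreover have "0 \<le> (b \<bullet> (S *v b)) * (b \<bullet> (X *v b))" for b
    using \<open>psd_matrix S\<close> X[of b] unfolding psd_matrix_def
    by (cases "b = 0") (simp_all add: order_less_imp_le)
  ultimately have "0 < (\<Sum>b\<in>B. (b \<bullet> (S *v b)) * (b \<bullet> (X *v b)))"
    by (intro sum_pos2[OF \<open>finite B\<close> \<open>b0 \<in> B\<close>])
  then show ?thesis
    by (simp add: trace_mult_eq_sum_eigenbasis[OF sym B eigen])
qed

lemma trace_mult_mono:
  fixes S X Y :: "real^'p::finite^'p"
  assumes "symmetric_matrix S" "psd_matrix S" and le: "\<And>x. x \<bullet> (Y *v x) \<le> x \<bullet> (X *v x)"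
  shows "trace (S ** Y) \<le> trace (S ** X)"
proof -
  have "0 \<le> trace (S ** (X - Y))"
    using assms(1,2) le
    by (intro trace_mult_nonneg) (simp_all add: matrix_vector_mult_diff_rdistrib inner_diff_right)
  moreover have "S ** X = S ** Y + S ** (X - Y)"
    by (simp add: matrix_add_ldistrib[symmetric])
  ultimately show ?thesis
    by (simp add: trace_add)
qed

lemma trace_mult_scaleR: "trace (S ** (c *\<^sub>R X)) = c * trace (S ** (X :: real^'p::finite^'p))"
  by (simp add: trace_def matrix_matrix_mult_def sum_distrib_left mult_ac)

section \<open>Quadratic forms and inverse matrices\<close>

lemma quadratic_form_le:
  fixes A :: "real^'p::finite^'p"
  obtains m where "0 < m" "\<And>x. x \<bullet> (A *v x) \<le> m * (x \<bullet> x)"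
proof -
  obtain K where "0 < K" and K: "\<And>x. norm (A *v x) \<le> norm x * K"
    using bounded_linear.pos_bounded[OF matrix_vector_mul_bounded_linear[of A]] by blast
  have "x \<bullet> (A *v x) \<le> K * (x \<bullet> x)" for x
  proof -
    have "x \<bullet> (A *v x) \<le> norm x * norm (A *v x)"
      by (rule norm_cauchy_schwarz)
    also have "\<dots> \<le> norm x * (norm x * K)"
      using K[of x] by (simp add: mult_left_mono)
    also have "\<dots> = K * (x \<bullet> x)"
      by (simp add: dot_square_norm power2_eq_square)
    finally show ?thesis .
  qed
  with \<open>0 < K\<close> that show thesis
    by blast
qed

lemma matrix_inv_right_if_coercive:
  fixes A :: "real^'p::finite^'p"
  assumes "0 < c" and coercive: "\<And>x. c * (x \<bullet> x) \<le> x \<bullet> (A *v x)"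
  shows "A ** matrix_inv A = mat 1"
proof -
  have "x = 0" if "A *v x = 0" for x
  proof -
    have "x \<bullet> x \<le> 0"
      using coercive[of x] that \<open>0 < c\<close> by (simp add: mult_le_0_iff)
    then show ?thesis
      by (metis order_antisym inner_ge_zero inner_eq_zero_iff)
  qed
  then have "invertible A"
    using matrix_left_invertible_ker invertible_left_inverse by blast
  then have "A ** matrix_inv A = mat 1 \<and> matrix_inv A ** A = mat 1"
    unfolding invertible_def matrix_inv_def by (rule someI_ex)
  then show ?thesis ..
qed

lemma inverse_matrix_pos_definite:
  fixes A Q :: "real^'p::finite^'p"
  assumes "A ** Q = mat 1" and A: "\<And>y. y \<noteq> 0 \<Longrightarrow> 0 < y \<bullet> (A *v y)" and "x \<noteq> 0"
  shows "0 < x \<bullet> (Q *v x)"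
proof -
  have "A *v (Q *v x) = x"
    using \<open>A ** Q = mat 1\<close> by (simp add: matrix_vector_mul_assoc)
  then have "Q *v x \<noteq> 0"
    using \<open>x \<noteq> 0\<close> by auto
  from A[OF this] show ?thesis
    using \<open>A *v (Q *v x) = x\<close> by (simp add: inner_commute)
qed

lemma inverse_matrix_loewner_antimono:
  fixes A B QA QB :: "real^'p::finite^'p"
  assumes symA: "\<And>x y. x \<bullet> (A *v y) = (A *v x) \<bullet> y" and psdA: "\<And>x. 0 \<le> x \<bullet> (A *v x)"
    and "A ** QA = mat 1" "B ** QB = mat 1"
    and le: "\<And>x. x \<bullet> (A *v x) \<le> x \<bullet> (B *v x)"
  shows "x \<bullet> (QB *v x) \<le> x \<bullet> (QA *v x)"
proof -
  define u where "u = QB *v x"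
  define v where "v = QA *v x"
  have "B *v u = x" "A *v v = x"
    unfolding u_def v_def using assms(3,4) by (simp_all add: matrix_vector_mul_assoc)
  have "0 \<le> (u - v) \<bullet> (A *v (u - v))"
    by (rule psdA)
  also have "\<dots> = u \<bullet> (A *v u) - u \<bullet> (A *v v) - v \<bullet> (A *v u) + v \<bullet> (A *v v)"
    by (simp add: matrix_vector_mult_diff_distrib inner_diff_left inner_diff_right)
  also have "\<dots> = u \<bullet> (A *v u) - 2 * (x \<bullet> u) + x \<bullet> v"
    using symA[of v u] \<open>A *v v = x\<close> by (simp add: inner_commute)
  also have "\<dots> \<le> x \<bullet> v - x \<bullet> u"
    using le[of u] \<open>B *v u = x\<close> by (simp add: inner_commute)
  finally show ?thesis
    unfolding u_def v_def by simp
qed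

section \<open>The resolvent \<open>Q_gamma\<close> and the map \<open>I_S\<close>\<close>

definition scatter :: "('n::finite \<Rightarrow> real^'p::finite^'p) \<Rightarrow> real^'n \<Rightarrow> real^'p^'p" where
  "scatter S D = (1 / real CARD('n)) *\<^sub>R (\<Sum>i\<in>UNIV. (D $ i) *\<^sub>R S i)"

lemma Q_gamma_eq_matrix_inv_scatter: "Q_gamma \<gamma> S D = matrix_inv (scatter S D + \<gamma> *\<^sub>R mat 1)"
  unfolding Q_gamma_def scatter_def ..

lemma sum_matrix_vector_mult: "(\<Sum>a\<in>A. f a) *v x = (\<Sum>a\<in>A. f a *v x)"
  by (induction A rule: infinite_finite_induct) (simp_all add: matrix_vector_mult_add_rdistrib)

lemma inner_scatter:
  fixes S :: "'n::finite \<Rightarrow> real^'p::finite^'p"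
  shows "x \<bullet> (scatter S D *v y) = (\<Sum>j\<in>UNIV. D $ j * (x \<bullet> (S j *v y))) / real CARD('n)"
  unfolding scatter_def
  by (simp add: sum_matrix_vector_mult scaleR_matrix_vector_assoc[symmetric] inner_sum_right)

lemma inner_scatter_symmetric:
  fixes S :: "'n::finite \<Rightarrow> real^'p::finite^'p"
  assumes "\<And>j. symmetric_matrix (S j)"
  shows "x \<bullet> (scatter S D *v y) = (scatter S D *v x) \<bullet> y"
proof -
  have "x \<bullet> (S j *v y) = y \<bullet> (S j *v x)" for j
    using symmetric_matrix_inner_commute[OF assms] by (simp add: inner_commute)
  then show ?thesis
    by (simp add: inner_scatter inner_commute[of "scatter S D *v x" y])
qed

lemma inner_scatter_mono:
  fixes S :: "'n::finite \<Rightarrow> real^'p::finite^'p"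
  assumes "\<And>j. psd_matrix (S j)" and "\<And>j. D $ j \<le> E $ j"
  shows "x \<bullet> (scatter S D *v x) \<le> x \<bullet> (scatter S E *v x)"
  using assms unfolding inner_scatter psd_matrix_def
  by (intro divide_right_mono sum_mono mult_right_mono) simp_all

lemma inner_scatter_nonneg:
  fixes S :: "'n::finite \<Rightarrow> real^'p::finite^'p"
  assumes "\<And>j. psd_matrix (S j)" and "\<And>j. 0 \<le> D $ j"
  shows "0 \<le> x \<bullet> (scatter S D *v x)"
  using inner_scatter_mono[of S 0 D x] assms by (simp add: inner_scatter)

lemma scatter_scaleR: "scatter S (c *\<^sub>R D) = c *\<^sub>R scatter S D"
  unfolding scatter_def by (simp add: scaleR_sum_right)

lemma inner_add_scaleR_mat_1: "x \<bullet> ((M + c *\<^sub>R mat 1) *v y) = x \<bullet> (M *v y) + c * (x \<bullet> (y :: real^'p::finite))"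
  by (simp add: matrix_vector_mult_add_rdistrib scaleR_matrix_vector_assoc[symmetric] inner_add_right)

lemma scatter_shift_coercive:
  fixes S :: "'n::finite \<Rightarrow> real^'p::finite^'p"
  assumes "\<And>j. psd_matrix (S j)" and "posdiag D"
  shows "\<gamma> * (x \<bullet> x) \<le> x \<bullet> ((scatter S D + \<gamma> *\<^sub>R mat 1) *v x)"
  using inner_scatter_nonneg[of S D x] assms unfolding posdiag_def
  by (simp add: inner_add_scaleR_mat_1 less_imp_le)

lemma scatter_shift_mult_Q_gamma:
  fixes S :: "'n::finite \<Rightarrow> real^'p::finite^'p"
  assumes "0 < \<gamma>" and "\<And>j. psd_matrix (S j)" and "posdiag D"
  shows "(scatter S D + \<gamma> *\<^sub>R mat 1) ** Q_gamma \<gamma> S D = mat 1"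
  unfolding Q_gamma_eq_matrix_inv_scatter
  using assms scatter_shift_coercive by (blast intro: matrix_inv_right_if_coercive)

lemma posdiag_I_S:
  fixes S :: "'n::finite \<Rightarrow> real^'p::finite^'p"
  assumes "0 < \<gamma>" and psd: "\<And>j. psd_matrix (S j)" and "\<And>j. symmetric_matrix (S j)"
    and "\<And>j. S j \<noteq> 0" and "posdiag D"
  shows "posdiag (I_S \<gamma> S D)"
proof -
  have "0 < x \<bullet> (Q_gamma \<gamma> S D *v x)" if "x \<noteq> 0" for x
  proof (rule inverse_matrix_pos_definite[OF scatter_shift_mult_Q_gamma[OF assms(1) psd \<open>posdiag D\<close>] _ that])
    show "0 < y \<bullet> ((scatter S D + \<gamma> *\<^sub>R mat 1) *v y)" if "y \<noteq> 0" for y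
    proof -
      have "0 < \<gamma> * (y \<bullet> y)"
        using \<open>0 < \<gamma>\<close> that by simp
      also have "\<dots> \<le> y \<bullet> ((scatter S D + \<gamma> *\<^sub>R mat 1) *v y)"
        by (rule scatter_shift_coercive[OF psd \<open>posdiag D\<close>])
      finally show ?thesis .
    qed
  qed
  then have "0 < trace (S j ** Q_gamma \<gamma> S D)" for j
    using assms by (intro trace_mult_pos) auto
  then show ?thesis
    unfolding posdiag_def I_S_def by simp
qed

lemma shifted_ratio_le:
  fixes a a' s m \<gamma> X :: real
  assumes "0 < m" "0 < \<gamma>" "1 \<le> X" "a \<le> m * s" "a' \<le> X * a"
  shows "a' + \<gamma> * s \<le> (X * m + \<gamma>) / (m + \<gamma>) * (a + \<gamma> * s)"
proof -
  have "(m + \<gamma>) * (a' + \<gamma> * s) \<le> (m + \<gamma>) * (X * a + \<gamma> * s)"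
    using assms by simp
  also have "\<dots> = (X * m + \<gamma>) * (a + \<gamma> * s) - \<gamma> * ((X - 1) * (m * s - a))"
    by (simp add: algebra_simps)
  also have "\<dots> \<le> (X * m + \<gamma>) * (a + \<gamma> * s)"
    using assms by simp
  finally show ?thesis
    using assms by (simp add: field_simps)
qed

lemma Q_gamma_loewner_ratio:
  fixes S :: "'n::finite \<Rightarrow> real^'p::finite^'p"
  assumes "0 < \<gamma>" and psd: "\<And>j. psd_matrix (S j)" and sym: "\<And>j. symmetric_matrix (S j)"
    and "posdiag D" "posdiag D'" and "1 \<le> X" "\<And>j. D' $ j \<le> X * D $ j"
    and "0 < m" and bound: "\<And>x. x \<bullet> (scatter S D *v x) \<le> m * (x \<bullet> x)"
  shows "x \<bullet> (((m + \<gamma>) / (X * m + \<gamma>)) *\<^sub>R Q_gamma \<gamma> S D *v x) \<le> x \<bullet> (Q_gamma \<gamma> S D' *v x)"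
proof -
  define c where "c = (X * m + \<gamma>) / (m + \<gamma>)"
  define A where "A = scatter S D + \<gamma> *\<^sub>R mat 1"
  define A' where "A' = scatter S D' + \<gamma> *\<^sub>R mat 1"
  have "0 < c"
    unfolding c_def using assms by (simp add: add_pos_pos)
  have A'_le: "y \<bullet> (A' *v y) \<le> y \<bullet> ((c *\<^sub>R A) *v y)" for y
  proof -
    have "y \<bullet> (scatter S D' *v y) \<le> X * (y \<bullet> (scatter S D *v y))"
      using inner_scatter_mono[OF psd, of D' "X *\<^sub>R D" y] assms(7)
      by (simp add: scatter_scaleR scaleR_matrix_vector_assoc[symmetric])
    then show ?thesis
      unfolding A_def A'_def c_def using shifted_ratio_le assms(1,6,8) bound
      by (simp add: inner_add_scaleR_mat_1 scaleR_matrix_vector_assoc[symmetric])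
  qed
  have "(c *\<^sub>R A) ** ((1 / c) *\<^sub>R Q_gamma \<gamma> S D) = mat 1"
    using scatter_shift_mult_Q_gamma[OF assms(1) psd \<open>posdiag D\<close>] \<open>0 < c\<close>
    unfolding A_def by (simp add: matrix_scalar_ac scalar_matrix_assoc[symmetric])
  then have "x \<bullet> (((1 / c) *\<^sub>R Q_gamma \<gamma> S D) *v x) \<le> x \<bullet> (Q_gamma \<gamma> S D' *v x)"
  proof (intro inverse_matrix_loewner_antimono[OF _ _ _ _ A'_le])
    show "y \<bullet> (A' *v z) = (A' *v y) \<bullet> z" for y z
      unfolding A'_def using inner_scatter_symmetric[where S=S and D=D' and x=y and y=z] sym
      by (simp add: inner_add_scaleR_mat_1 inner_commute[of _ z])
    show "0 \<le> y \<bullet> (A' *v y)" for y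
      unfolding A'_def using scatter_shift_coercive[OF psd \<open>posdiag D'\<close>, of \<gamma> y] \<open>0 < \<gamma>\<close>
      by (meson inner_ge_zero mult_nonneg_nonneg order_trans less_imp_le)
    show "A' ** Q_gamma \<gamma> S D' = mat 1"
      unfolding A'_def by (rule scatter_shift_mult_Q_gamma[OF assms(1) psd \<open>posdiag D'\<close>])
  qed
  then show ?thesis
    unfolding c_def by simp
qed

lemma I_S_le_ratio:
  fixes S :: "'n::finite \<Rightarrow> real^'p::finite^'p"
  assumes "0 < \<gamma>" and psd: "\<And>j. psd_matrix (S j)" and sym: "\<And>j. symmetric_matrix (S j)"
    and "posdiag D" "posdiag D'" and "1 \<le> X" "\<And>j. D' $ j \<le> X * D $ j"
    and "0 < m" and "\<And>x. x \<bullet> (scatter S D *v x) \<le> m * (x \<bullet> x)"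
  shows "I_S \<gamma> S D $ i \<le> (X * m + \<gamma>) / (m + \<gamma>) * I_S \<gamma> S D' $ i"
proof -
  define c where "c = (X * m + \<gamma>) / (m + \<gamma>)"
  have "0 < c"
    unfolding c_def using assms by (simp add: add_pos_pos)
  have "trace (S i ** ((1 / c) *\<^sub>R Q_gamma \<gamma> S D)) \<le> trace (S i ** Q_gamma \<gamma> S D')"
    using sym psd Q_gamma_loewner_ratio[OF assms] unfolding c_def by (intro trace_mult_mono) simp_all
  then have "trace (S i ** Q_gamma \<gamma> S D) \<le> c * trace (S i ** Q_gamma \<gamma> S D')"
    using \<open>0 < c\<close> by (simp add: trace_mult_scaleR divide_le_eq mult.commute)
  then have "trace (S i ** Q_gamma \<gamma> S D) / real CARD('n) \<le> c * (trace (S i ** Q_gamma \<gamma> S D') / real CARD('n))"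
    by (simp add: divide_right_mono)
  then show ?thesis
    unfolding I_S_def c_def by simp
qed

section \<open>The distance \<open>d_s\<close>\<close>

definition d_s_scalar :: "real \<Rightarrow> real \<Rightarrow> real" where
  "d_s_scalar a b = \<bar>a - b\<bar> / sqrt (a * b)"

lemma d_s_eq_Max: "d_s D D' = Max (range (\<lambda>i. d_s_scalar (D $ i) (D' $ i)))"
  unfolding d_s_def d_s_scalar_def ..

lemma d_s_scalar_le_d_s: "d_s_scalar (D $ i) (D' $ i) \<le> d_s D D'"
  unfolding d_s_eq_Max by (rule Max_ge) auto

lemma d_s_le_iff: "d_s D D' \<le> K \<longleftrightarrow> (\<forall>i. d_s_scalar (D $ i) (D' $ i) \<le> K)"
  unfolding d_s_eq_Max by (subst Max_le_iff) auto

lemma d_s_scalar_nonneg: "0 < a \<Longrightarrow> 0 < b \<Longrightarrow> 0 \<le> d_s_scalar a b"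
  unfolding d_s_scalar_def by simp

lemma d_s_nonneg: "posdiag D \<Longrightarrow> posdiag D' \<Longrightarrow> 0 \<le> d_s D D'"
  unfolding posdiag_def by (meson d_s_scalar_le_d_s d_s_scalar_nonneg order_trans)

lemma d_s_le_0_imp_eq:
  assumes "posdiag D" "posdiag D'" "d_s D D' \<le> 0"
  shows "D = D'"
proof -
  have "\<bar>D $ i - D' $ i\<bar> / sqrt (D $ i * D' $ i) \<le> 0" for i
    using assms(3) unfolding d_s_le_iff d_s_scalar_def by blast
  moreover have "0 < sqrt (D $ i * D' $ i)" for i
    using assms(1,2) unfolding posdiag_def by simp
  ultimately have "\<bar>D $ i - D' $ i\<bar> \<le> 0" for i
    by (simp add: divide_le_eq)
  then show ?thesis
    by (simp add: vec_eq_iff)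
qed

lemma d_s_scalar_commute: "d_s_scalar a b = d_s_scalar b a"
  unfolding d_s_scalar_def by (simp add: abs_minus_commute mult.commute)

lemma d_s_scalar_eq_ratio:
  assumes "0 < b" "b \<le> a"
  shows "d_s_scalar a b = (a / b - 1) / sqrt (a / b)"
proof -
  have "(a / b - 1) / sqrt (a / b) = (a - b) / (sqrt a * sqrt b)"
    using assms by (simp add: real_sqrt_divide field_simps)
  then show ?thesis
    using assms by (simp add: d_s_scalar_def real_sqrt_mult)
qed

lemma d_s_scalar_eq_max_ratio:
  assumes "0 < a" "0 < b"
  shows "d_s_scalar a b = (max (a / b) (b / a) - 1) / sqrt (max (a / b) (b / a))"
proof (cases "b \<le> a")
  case True
  then have "b / a \<le> a / b"
    using assms mult_mono[of b a b a] by (simp add: divide_simps)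
  then show ?thesis
    using d_s_scalar_eq_ratio[OF assms(2) True] by (simp add: max_def)
next
  case False
  then have "a / b \<le> b / a"
    using assms mult_mono[of a b a b] by (simp add: divide_simps)
  then show ?thesis
    using d_s_scalar_eq_ratio[of a b] d_s_scalar_commute[of a b] assms False by (simp add: max_def)
qed

lemma d_s_scalar_le_ratio_bound:
  fixes a b c :: real
  assumes "0 < a" "0 < b" "1 \<le> c" "a \<le> c * b" "b \<le> c * a"
  shows "d_s_scalar a b \<le> (c - 1) / sqrt c"
proof (rule power2_le_imp_le)
  show "0 \<le> (c - 1) / sqrt c"
    using assms by simp
  have "(c * a - b) * (a - c * b) \<le> 0"
    using assms by (simp add: mult_nonneg_nonpos)
  then have "c * (a - b)\<^sup>2 \<le> a * b * (c - 1)\<^sup>2"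
    by (simp add: power2_eq_square algebra_simps)
  then have "(a - b)\<^sup>2 / (a * b) \<le> (c - 1)\<^sup>2 / c"
    using assms by (simp add: divide_le_eq le_divide_eq mult_ac)
  then show "(d_s_scalar a b)\<^sup>2 \<le> ((c - 1) / sqrt c)\<^sup>2"
    using assms by (simp add: d_s_scalar_def power_divide)
qed

text \<open>The inequality behind the contraction factor \<open>sqrt (m / (m + \<gamma>))\<close>: with
  \<open>\<phi> X = (X - 1) / sqrt X\<close>, replacing the ratio \<open>X\<close> by \<open>(X * m + \<gamma>) / (m + \<gamma>)\<close> shrinks
  \<open>\<phi>\<close> at least by that factor.\<close>


lemma shifted_ratio_contraction:
  fixes X m \<gamma> :: real
  assumes "1 \<le> X" "0 < m" "0 < \<gamma>"
  shows "((X * m + \<gamma>) / (m + \<gamma>) - 1) / sqrt ((X * m + \<gamma>) / (m + \<gamma>))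
    \<le> sqrt (m / (m + \<gamma>)) * ((X - 1) / sqrt X)"
proof (rule power2_le_imp_le)
  define c where "c = (X * m + \<gamma>) / (m + \<gamma>)"
  have pos: "0 < X * m + \<gamma>" "0 < m + \<gamma>"
    using assms by (simp_all add: add_pos_pos)
  then have "1 \<le> c"
    unfolding c_def using assms by (simp add: le_divide_eq)
  show "0 \<le> sqrt (m / (m + \<gamma>)) * ((X - 1) / sqrt X)"
    using assms by simp
  have "c - 1 = m * (X - 1) / (m + \<gamma>)"
    unfolding c_def using pos by (simp add: field_simps)
  have "((c - 1) / sqrt c)\<^sup>2 = (c - 1)\<^sup>2 / c"
    using \<open>1 \<le> c\<close> by (simp add: power_divide)
  also have "\<dots> = (m * (X - 1) / (m + \<gamma>))\<^sup>2 / ((X * m + \<gamma>) / (m + \<gamma>))"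
    unfolding \<open>c - 1 = m * (X - 1) / (m + \<gamma>)\<close> by (simp add: c_def)
  also have "\<dots> = m * (X - 1)\<^sup>2 / (m + \<gamma>) * (m / (X * m + \<gamma>))"
    using pos by (simp add: power_divide power_mult_distrib power2_eq_square)
  also have "\<dots> \<le> m * (X - 1)\<^sup>2 / (m + \<gamma>) * (1 / X)"
    using assms pos by (intro mult_left_mono) (simp_all add: divide_simps)
  also have "\<dots> = (sqrt (m / (m + \<gamma>)) * ((X - 1) / sqrt X))\<^sup>2"
    using assms pos by (simp add: power_mult_distrib power_divide)
  finally show "((c - 1) / sqrt c)\<^sup>2 \<le> (sqrt (m / (m + \<gamma>)) * ((X - 1) / sqrt X))\<^sup>2" .
qed

lemma d_s_ratio_bound:
  assumes "posdiag D" "posdiag D'"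
  obtains X where "1 \<le> X" "\<And>j. D' $ j \<le> X * D $ j" "\<And>j. D $ j \<le> X * D' $ j"
    "(X - 1) / sqrt X \<le> d_s D D'"
proof -
  define r where "r j = max (D $ j / D' $ j) (D' $ j / D $ j)" for j
  define X where "X = Max (range r)"
  have pos: "0 < D $ j" "0 < D' $ j" for j
    using assms unfolding posdiag_def by auto
  have r_le: "r j \<le> X" for j
    unfolding X_def by (rule Max_ge) auto
  have "X \<in> range r"
    unfolding X_def by (rule Max_in) auto
  then obtain j0 where "X = r j0"
    by blast
  have "1 \<le> X"
    using pos[of j0] unfolding \<open>X = r j0\<close> r_def
    by (cases "D $ j0 \<le> D' $ j0") (simp_all add: le_max_iff_disj le_divide_eq)
  moreover have "D' $ j \<le> X * D $ j" "D $ j \<le> X * D' $ j" for j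
    using r_le[of j] pos[of j] unfolding r_def by (simp_all add: divide_le_eq)
  moreover have "(X - 1) / sqrt X \<le> d_s D D'"
    using d_s_scalar_le_d_s[of D j0 D'] d_s_scalar_eq_max_ratio[OF pos(1,2)] \<open>X = r j0\<close>
    unfolding r_def by simp
  ultimately show thesis
    using that by blast
qed

lemma lipschitz_ds_mono:
  assumes "lipschitz_ds k f" "k \<le> k'"
  shows "lipschitz_ds k' f"
  unfolding lipschitz_ds_def
proof (intro allI impI)
  fix D D' :: "real^'a::finite"
  assume "posdiag D" "posdiag D'"
  then have "d_s (f D) (f D') \<le> k * d_s D D'"
    using assms(1) unfolding lipschitz_ds_def by blast
  also have "\<dots> \<le> k' * d_s D D'"
    using \<open>k \<le> k'\<close> d_s_nonneg[OF \<open>posdiag D\<close> \<open>posdiag D'\<close>] by (rule mult_right_mono)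
  finally show "d_s (f D) (f D') \<le> k' * d_s D D'" .
qed

lemma lipschitz_ds_comp:
  assumes "lipschitz_ds a g" "lipschitz_ds b f" "0 \<le> a" "\<And>D. posdiag D \<Longrightarrow> posdiag (f D)"
  shows "lipschitz_ds (a * b) (\<lambda>D. g (f D))"
  using assms unfolding lipschitz_ds_def by (metis (no_types, opaque_lifting) mult.assoc mult_left_mono order_trans)

section \<open>Stability of \<open>I_S\<close>\<close>

lemma d_s_I_S_le:
  fixes S :: "'n::finite \<Rightarrow> real^'p::finite^'p"
  assumes "0 < \<gamma>" and psd: "\<And>j. psd_matrix (S j)" and sym: "\<And>j. symmetric_matrix (S j)"
    and nz: "\<And>j. S j \<noteq> 0" and D: "posdiag D" and D': "posdiag D'" and "0 < m"
    and bound: "\<And>x. x \<bullet> (scatter S D *v x) \<le> m * (x \<bullet> x)"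
    and bound': "\<And>x. x \<bullet> (scatter S D' *v x) \<le> m * (x \<bullet> x)"
  shows "d_s (I_S \<gamma> S D) (I_S \<gamma> S D') \<le> sqrt (m / (m + \<gamma>)) * d_s D D'"
proof -
  obtain X where "1 \<le> X" and DX: "\<And>j. D' $ j \<le> X * D $ j" and D'X: "\<And>j. D $ j \<le> X * D' $ j"
    and X_le: "(X - 1) / sqrt X \<le> d_s D D'"
    using d_s_ratio_bound[OF D D'] by blast
  define c where "c = (X * m + \<gamma>) / (m + \<gamma>)"
  have "1 \<le> c"
    unfolding c_def using \<open>1 \<le> X\<close> \<open>0 < m\<close> \<open>0 < \<gamma>\<close> by (simp add: le_divide_eq)
  have I_pos: "0 < I_S \<gamma> S D $ i" "0 < I_S \<gamma> S D' $ i" for i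
    using posdiag_I_S[OF assms(1) psd sym nz D] posdiag_I_S[OF assms(1) psd sym nz D']
    unfolding posdiag_def by auto
  have "d_s_scalar (I_S \<gamma> S D $ i) (I_S \<gamma> S D' $ i) \<le> sqrt (m / (m + \<gamma>)) * d_s D D'" for i
  proof -
    have "I_S \<gamma> S D $ i \<le> c * I_S \<gamma> S D' $ i"
      unfolding c_def by (rule I_S_le_ratio[OF assms(1) psd sym D D' \<open>1 \<le> X\<close> DX \<open>0 < m\<close> bound])
    moreover have "I_S \<gamma> S D' $ i \<le> c * I_S \<gamma> S D $ i"
      unfolding c_def by (rule I_S_le_ratio[OF assms(1) psd sym D' D \<open>1 \<le> X\<close> D'X \<open>0 < m\<close> bound'])
    ultimately have "d_s_scalar (I_S \<gamma> S D $ i) (I_S \<gamma> S D' $ i) \<le> (c - 1) / sqrt c"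
      using I_pos \<open>1 \<le> c\<close> by (intro d_s_scalar_le_ratio_bound)
    also have "\<dots> \<le> sqrt (m / (m + \<gamma>)) * ((X - 1) / sqrt X)"
      unfolding c_def using \<open>1 \<le> X\<close> \<open>0 < m\<close> \<open>0 < \<gamma>\<close> by (rule shifted_ratio_contraction)
    also have "\<dots> \<le> sqrt (m / (m + \<gamma>)) * d_s D D'"
      using X_le \<open>0 < m\<close> \<open>0 < \<gamma>\<close> by (intro mult_left_mono) simp_all
    finally show ?thesis .
  qed
  then show ?thesis
    unfolding d_s_le_iff by blast
qed

lemma stable_I_S:
  fixes S :: "'n::finite \<Rightarrow> real^'p::finite^'p"
  assumes "0 < \<gamma>" and psd: "\<And>j. psd_matrix (S j)" and "\<And>j. symmetric_matrix (S j)"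
    and "\<And>j. S j \<noteq> 0"
  shows "stable (I_S \<gamma> S)"
  unfolding stable_def lipschitz_ds_def
proof (intro allI impI)
  fix D D' :: "real^'n"
  assume D: "posdiag D" and D': "posdiag D'"
  obtain m where "0 < m" and m: "\<And>x. x \<bullet> (scatter S (D + D') *v x) \<le> m * (x \<bullet> x)"
    using quadratic_form_le by blast
  have "D $ j \<le> (D + D') $ j" "D' $ j \<le> (D + D') $ j" for j
    using D D' unfolding posdiag_def by (simp_all add: less_imp_le)
  then have "x \<bullet> (scatter S D *v x) \<le> m * (x \<bullet> x)" "x \<bullet> (scatter S D' *v x) \<le> m * (x \<bullet> x)" for x
    using inner_scatter_mono[where S=S, OF psd] m[of x] by (meson order_trans)+
  then have "d_s (I_S \<gamma> S D) (I_S \<gamma> S D') \<le> sqrt (m / (m + \<gamma>)) * d_s D D'"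
    by (rule d_s_I_S_le[OF assms D D' \<open>0 < m\<close>])
  also have "\<dots> \<le> 1 * d_s D D'"
    using \<open>0 < m\<close> \<open>0 < \<gamma>\<close> d_s_nonneg[OF D D'] by (intro mult_right_mono) simp_all
  finally show "d_s (I_S \<gamma> S D) (I_S \<gamma> S D') \<le> 1 * d_s D D'" .
qed

lemma lipschitz_ds_I_S_comp_bounded:
  fixes S :: "'n::finite \<Rightarrow> real^'p::finite^'p"
  assumes "0 < \<gamma>" and psd: "\<And>j. psd_matrix (S j)" and "\<And>j. symmetric_matrix (S j)"
    and "\<And>j. S j \<noteq> 0" and f_pos: "\<And>D. posdiag D \<Longrightarrow> posdiag (f D)" and "stable f"
    and f_le: "\<And>D i. posdiag D \<Longrightarrow> f D $ i \<le> f_bound $ i"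
  shows "\<exists>k. 0 \<le> k \<and> k < 1 \<and> lipschitz_ds k (\<lambda>D. I_S \<gamma> S (f D))"
proof -
  obtain m where "0 < m" and m: "\<And>x. x \<bullet> (scatter S f_bound *v x) \<le> m * (x \<bullet> x)"
    using quadratic_form_le by blast
  have "lipschitz_ds (sqrt (m / (m + \<gamma>))) (\<lambda>D. I_S \<gamma> S (f D))"
    unfolding lipschitz_ds_def
  proof (intro allI impI)
    fix D D' :: "real^'n"
    assume D: "posdiag D" and D': "posdiag D'"
    have bound: "x \<bullet> (scatter S (f E) *v x) \<le> m * (x \<bullet> x)" if "posdiag E" for E x
      using inner_scatter_mono[where S=S, OF psd f_le[OF that]] m[of x] by (rule order_trans)
    have "d_s (I_S \<gamma> S (f D)) (I_S \<gamma> S (f D')) \<le> sqrt (m / (m + \<gamma>)) * d_s (f D) (f D')"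
      by (rule d_s_I_S_le[OF assms(1-4) f_pos[OF D] f_pos[OF D'] \<open>0 < m\<close> bound[OF D] bound[OF D']])
    also have "\<dots> \<le> sqrt (m / (m + \<gamma>)) * d_s D D'"
      using \<open>stable f\<close> D D' \<open>0 < m\<close> \<open>0 < \<gamma>\<close> unfolding stable_def lipschitz_ds_def
      by (intro mult_left_mono) auto
    finally show "d_s (I_S \<gamma> S (f D)) (I_S \<gamma> S (f D')) \<le> sqrt (m / (m + \<gamma>)) * d_s D D'" .
  qed
  moreover have "0 \<le> sqrt (m / (m + \<gamma>))" "sqrt (m / (m + \<gamma>)) < 1"
    using \<open>0 < m\<close> \<open>0 < \<gamma>\<close> by simp_all
  ultimately show ?thesis
    by blast
qed

section \<open>Fixed points of \<open>d_s\<close>-contractions\<close>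

lemma two_ln_le_diff_inverse:
  fixes s :: real
  assumes "1 \<le> s"
  shows "2 * ln s \<le> s - 1 / s"
proof -
  let ?g = "\<lambda>t::real. t - 1 / t - 2 * ln t"
  have "?g 1 \<le> ?g s"
  proof (rule DERIV_nonneg_imp_nondecreasing[OF assms])
    fix t :: real
    assume "1 \<le> t" "t \<le> s"
    then have "(?g has_real_derivative (1 + 1 / t\<^sup>2 - 2 / t)) (at t)"
      by (auto intro!: derivative_eq_intros simp: power2_eq_square field_simps)
    moreover have "1 + 1 / t\<^sup>2 - 2 / t = (1 - 1 / t)\<^sup>2"
      using \<open>1 \<le> t\<close> by (simp add: power2_eq_square field_simps)
    ultimately show "\<exists>y. (?g has_real_derivative y) (at t) \<and> 0 \<le> y"
      by auto
  qed
  then show ?thesis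
    by simp
qed

lemma abs_ln_diff_le_d_s_scalar:
  assumes "0 < a" "0 < b"
  shows "\<bar>ln a - ln b\<bar> \<le> d_s_scalar a b"
proof -
  have ln_le: "ln a - ln b \<le> d_s_scalar a b" if "0 < b" "b \<le> a" for a b :: real
  proof -
    define r where "r = a / b"
    have "1 \<le> r"
      unfolding r_def using that by simp
    have "ln a - ln b = 2 * ln (sqrt r)"
      unfolding r_def using that by (simp add: ln_div ln_sqrt)
    also have "\<dots> \<le> sqrt r - 1 / sqrt r"
      using \<open>1 \<le> r\<close> by (intro two_ln_le_diff_inverse) simp
    also have "\<dots> = (r - 1) / sqrt r"
      using \<open>1 \<le> r\<close> by (simp add: field_simps)
    also have "\<dots> = d_s_scalar a b"
      unfolding r_def using d_s_scalar_eq_ratio[OF that] by simp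
    finally show ?thesis .
  qed
  show ?thesis
  proof (cases "b \<le> a")
    case True
    then show ?thesis
      using ln_le[OF assms(2) True] assms by simp
  next
    case False
    then show ?thesis
      using ln_le[of a b] assms d_s_scalar_commute[of a b] by simp
  qed
qed

lemma tendsto_d_s_0_iff:
  assumes z: "posdiag z" and y: "\<And>n. posdiag (y n)"
  shows "(\<lambda>n. d_s (y n) z) \<longlonglongrightarrow> 0 \<longleftrightarrow> (\<forall>i. (\<lambda>n. y n $ i) \<longlonglongrightarrow> z $ i)"
proof
  assume d_s_0: "(\<lambda>n. d_s (y n) z) \<longlonglongrightarrow> 0"
  show "\<forall>i. (\<lambda>n. y n $ i) \<longlonglongrightarrow> z $ i"
  proof
    fix i
    have "\<bar>ln (y n $ i) - ln (z $ i)\<bar> \<le> d_s (y n) z" for n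
      using y[of n] z unfolding posdiag_def
      by (intro order_trans[OF abs_ln_diff_le_d_s_scalar d_s_scalar_le_d_s]) auto
    then have "(\<lambda>n. ln (y n $ i) - ln (z $ i)) \<longlonglongrightarrow> 0"
      by (intro Lim_null_comparison[OF _ d_s_0]) simp
    then have "(\<lambda>n. exp (ln (y n $ i))) \<longlonglongrightarrow> exp (ln (z $ i))"
      by (intro tendsto_exp) (simp add: LIM_zero_iff)
    then show "(\<lambda>n. y n $ i) \<longlonglongrightarrow> z $ i"
      using y z unfolding posdiag_def by simp
  qed
next
  assume conv: "\<forall>i. (\<lambda>n. y n $ i) \<longlonglongrightarrow> z $ i"
  have z_pos: "0 < z $ i" for i
    using z unfolding posdiag_def ..
  have "(\<lambda>n. d_s_scalar (y n $ i) (z $ i)) \<longlonglongrightarrow> d_s_scalar (z $ i) (z $ i)" for i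
    unfolding d_s_scalar_def using z_pos[of i]
    by (intro tendsto_divide tendsto_rabs tendsto_diff tendsto_real_sqrt tendsto_mult tendsto_const
        conv[rule_format]) simp
  then have "(\<lambda>n. \<Sum>i\<in>UNIV. d_s_scalar (y n $ i) (z $ i)) \<longlonglongrightarrow> (\<Sum>i\<in>UNIV. d_s_scalar (z $ i) (z $ i))"
    by (rule tendsto_sum)
  then have sum_0: "(\<lambda>n. \<Sum>i\<in>UNIV. d_s_scalar (y n $ i) (z $ i)) \<longlonglongrightarrow> 0"
    by (simp add: d_s_scalar_def)
  have "d_s (y n) z \<le> (\<Sum>i\<in>UNIV. d_s_scalar (y n $ i) (z $ i))" for n
    unfolding d_s_le_iff
  proof
    fix i
    show "d_s_scalar (y n $ i) (z $ i) \<le> (\<Sum>i\<in>UNIV. d_s_scalar (y n $ i) (z $ i))"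
      using y[of n] z unfolding posdiag_def by (intro member_le_sum d_s_scalar_nonneg) auto
  qed
  then show "(\<lambda>n. d_s (y n) z) \<longlonglongrightarrow> 0"
    using d_s_nonneg[OF y z] by (intro Lim_null_comparison[OF _ sum_0]) simp
qed

lemma convergent_if_increments_le_geometric:
  fixes u :: "nat \<Rightarrow> real"
  assumes "\<And>n. \<bar>u (Suc n) - u n\<bar> \<le> C * q ^ n" and "0 \<le> q" "q < 1"
  shows "convergent u"
proof -
  have "summable (\<lambda>n. C * q ^ n)"
    using assms by (intro summable_mult summable_geometric) simp
  then have "summable (\<lambda>n. u (Suc n) - u n)"
    by (rule summable_comparison_test') (use assms(1) in simp)
  then have "(\<lambda>n. \<Sum>j<n. u (Suc j) - u j) \<longlonglongrightarrow> (\<Sum>n. u (Suc n) - u n)"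
    by (rule summable_LIMSEQ)
  then have "(\<lambda>n. u n - u 0) \<longlonglongrightarrow> (\<Sum>n. u (Suc n) - u n)"
    by (simp only: sum_lessThan_telescope)
  then have "(\<lambda>n. (u n - u 0) + u 0) \<longlonglongrightarrow> (\<Sum>n. u (Suc n) - u n) + u 0"
    by (intro tendsto_add tendsto_const)
  then show ?thesis
    unfolding convergent_def by auto
qed

lemma d_s_geometric_convergent:
  assumes x_pos: "\<And>n. posdiag (x n)" and step: "\<And>n. d_s (x (Suc n)) (x n) \<le> C * k ^ n"
    and "0 \<le> k" "k < 1"
  obtains z where "posdiag z" "\<And>i. (\<lambda>n. x n $ i) \<longlonglongrightarrow> z $ i"
proof -
  have "convergent (\<lambda>n. ln (x n $ i))" for i
  proof (rule convergent_if_increments_le_geometric[OF _ \<open>0 \<le> k\<close> \<open>k < 1\<close>])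
    fix n
    have "\<bar>ln (x (Suc n) $ i) - ln (x n $ i)\<bar> \<le> d_s (x (Suc n)) (x n)"
      using x_pos[of n] x_pos[of "Suc n"] unfolding posdiag_def
      by (intro order_trans[OF abs_ln_diff_le_d_s_scalar d_s_scalar_le_d_s]) auto
    then show "\<bar>ln (x (Suc n) $ i) - ln (x n $ i)\<bar> \<le> C * k ^ n"
      using step by (rule order_trans)
  qed
  then obtain L where L: "\<And>i. (\<lambda>n. ln (x n $ i)) \<longlonglongrightarrow> L i"
    unfolding convergent_def by metis
  define z where "z = (\<chi> i. exp (L i))"
  have "posdiag z"
    unfolding z_def posdiag_def by simp
  moreover have "(\<lambda>n. x n $ i) \<longlonglongrightarrow> z $ i" for i
    using tendsto_exp[OF L[of i]] x_pos unfolding z_def posdiag_def by simp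
  ultimately show thesis
    using that by blast
qed

lemma lipschitz_ds_tendsto:
  fixes F :: "real^'n::finite \<Rightarrow> real^'n"
  assumes F_pos: "\<And>D. posdiag D \<Longrightarrow> posdiag (F D)" and F: "lipschitz_ds k F"
    and z: "posdiag z" and x: "\<And>n. posdiag (x n)" and x_z: "\<And>i. (\<lambda>n. x n $ i) \<longlonglongrightarrow> z $ i"
  shows "(\<lambda>n. F (x n) $ i) \<longlonglongrightarrow> F z $ i"
proof -
  have "(\<lambda>n. d_s (x n) z) \<longlonglongrightarrow> 0"
    using x_z by (intro tendsto_d_s_0_iff[OF z x, THEN iffD2] allI)
  then have "(\<lambda>n. k * d_s (x n) z) \<longlonglongrightarrow> k * 0"
    by (intro tendsto_mult tendsto_const)
  then have lim: "(\<lambda>n. k * d_s (x n) z) \<longlonglongrightarrow> 0"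
    by simp
  have bound: "\<forall>n. norm (d_s (F (x n)) (F z)) \<le> k * d_s (x n) z"
  proof
    fix n
    have "d_s (F (x n)) (F z) \<le> k * d_s (x n) z"
      using F x[of n] z unfolding lipschitz_ds_def by blast
    moreover have "0 \<le> d_s (F (x n)) (F z)"
      by (rule d_s_nonneg[OF F_pos[OF x] F_pos[OF z]])
    ultimately show "norm (d_s (F (x n)) (F z)) \<le> k * d_s (x n) z"
      by simp
  qed
  have "(\<lambda>n. d_s (F (x n)) (F z)) \<longlonglongrightarrow> 0"
    by (rule Lim_null_comparison[OF always_eventually[OF bound] lim])
  then show ?thesis
    by (rule tendsto_d_s_0_iff[where y="\<lambda>n. F (x n)", OF F_pos[OF z] F_pos[OF x], THEN iffD1, rule_format])
qed

lemma posdiag_funpow: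
  fixes F :: "real^'n::finite \<Rightarrow> real^'n"
  assumes "\<And>D. posdiag D \<Longrightarrow> posdiag (F D)" and "posdiag D"
  shows "posdiag ((F ^^ n) D)"
proof (induction n)
  case 0
  show ?case
    using assms(2) by simp
next
  case (Suc n)
  then show ?case
    using assms(1) by simp
qed

lemma lipschitz_ds_funpow_step:
  fixes F :: "real^'n::finite \<Rightarrow> real^'n"
  assumes F_pos: "\<And>D. posdiag D \<Longrightarrow> posdiag (F D)" and "0 \<le> k" "lipschitz_ds k F" and "posdiag D"
  shows "d_s ((F ^^ Suc n) D) ((F ^^ n) D) \<le> d_s (F D) D * k ^ n"
proof (induction n)
  case (Suc n)
  have "d_s (F ((F ^^ Suc n) D)) (F ((F ^^ n) D)) \<le> k * d_s ((F ^^ Suc n) D) ((F ^^ n) D)"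
    using assms(3) posdiag_funpow[where F=F, OF F_pos \<open>posdiag D\<close>] unfolding lipschitz_ds_def by blast
  then have "d_s ((F ^^ Suc (Suc n)) D) ((F ^^ Suc n) D) \<le> k * d_s ((F ^^ Suc n) D) ((F ^^ n) D)"
    by simp
  also have "\<dots> \<le> k * (d_s (F D) D * k ^ n)"
    using Suc.IH \<open>0 \<le> k\<close> by (rule mult_left_mono)
  finally show ?case
    by (simp add: mult_ac)
qed simp

lemma lipschitz_ds_contraction_has_fixpoint:
  fixes F :: "real^'n::finite \<Rightarrow> real^'n"
  assumes F_pos: "\<And>D. posdiag D \<Longrightarrow> posdiag (F D)" and "0 \<le> k" "k < 1" and F: "lipschitz_ds k F"
  obtains z where "posdiag z" "F z = z"
proof -
  define x where "x n = (F ^^ n) (\<chi> i. 1)" for n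
  have "posdiag (\<chi> i. 1 :: real^'n)"
    unfolding posdiag_def by simp
  then have x_pos: "posdiag (x n)" and step: "d_s (x (Suc n)) (x n) \<le> d_s (x 1) (x 0) * k ^ n" for n
    unfolding x_def using posdiag_funpow[where F=F, OF F_pos] lipschitz_ds_funpow_step[where F=F, OF F_pos \<open>0 \<le> k\<close> F]
    by simp_all
  have x_Suc: "x (Suc n) = F (x n)" for n
    unfolding x_def by simp
  obtain z where "posdiag z" and x_z: "\<And>i. (\<lambda>n. x n $ i) \<longlonglongrightarrow> z $ i"
    using d_s_geometric_convergent[OF x_pos step \<open>0 \<le> k\<close> \<open>k < 1\<close>] by blast
  have "(\<lambda>n. F (x n) $ i) \<longlonglongrightarrow> F z $ i" for i
    by (rule lipschitz_ds_tendsto[where F=F, OF F_pos F \<open>posdiag z\<close> x_pos x_z])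
  then have "(\<lambda>n. x (Suc n) $ i) \<longlonglongrightarrow> F z $ i" for i
    by (simp add: x_Suc)
  moreover have "(\<lambda>n. x (Suc n) $ i) \<longlonglongrightarrow> z $ i" for i
    using x_z by (rule LIMSEQ_Suc)
  ultimately have "F z $ i = z $ i" for i
    by (rule LIMSEQ_unique)
  then have "F z = z"
    by (simp add: vec_eq_iff)
  with \<open>posdiag z\<close> that show thesis
    by blast
qed

lemma lipschitz_ds_contraction_unique_fixpoint:
  fixes F :: "real^'n::finite \<Rightarrow> real^'n"
  assumes F_pos: "\<And>D. posdiag D \<Longrightarrow> posdiag (F D)" and "0 \<le> k" "k < 1" and F: "lipschitz_ds k F"
  shows "\<exists>!D. posdiag D \<and> D = F D"
proof -
  obtain z where z: "posdiag z" "F z = z"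
    using lipschitz_ds_contraction_has_fixpoint[OF assms] by blast
  have "y = z" if y: "posdiag y" "y = F y" for y
  proof -
    have "d_s (F y) (F z) \<le> k * d_s y z"
      using F y(1) z(1) unfolding lipschitz_ds_def by blast
    then have "d_s y z \<le> k * d_s y z"
      by (simp only: y(2)[symmetric] z(2))
    then have "(1 - k) * d_s y z \<le> 0"
      by (simp add: algebra_simps)
    then have "d_s y z \<le> 0"
      using \<open>k < 1\<close> by (simp add: mult_le_0_iff)
    then show ?thesis
      by (rule d_s_le_0_imp_eq[OF y(1) z(1)])
  qed
  moreover have "posdiag z \<and> z = F z"
    using z by simp
  ultimately show ?thesis
    by blast
qed

theorem corollary2:
  fixes \<gamma> :: real and S :: "'n::finite \<Rightarrow> real^'p::finite^'p"
    and f :: "real^'n \<Rightarrow> real^'n" and lam_f :: real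
  assumes "\<gamma> > 0"
    and "\<And>i. psd_matrix (S i)" and "\<And>i. symmetric_matrix (S i)" and "\<And>i. S i \<noteq> 0"
    and "\<And>D. posdiag D \<Longrightarrow> posdiag (f D)"
    and "stable f"
    and "lipschitz_ds lam_f f"
    and "(\<exists>f0. \<forall>D. posdiag D \<longrightarrow> (\<forall>i. f D $ i \<le> f0 $ i)) \<or> lam_f < 1"
  shows "\<exists>!D. posdiag D \<and> D = I_S \<gamma> S (f D)"
proof -
  have I_S_f_pos: "posdiag (I_S \<gamma> S (f D))" if "posdiag D" for D
    by (rule posdiag_I_S[where S=S, OF assms(1-4) assms(5)[OF that]])
  have "\<exists>k. 0 \<le> k \<and> k < 1 \<and> lipschitz_ds k (\<lambda>D. I_S \<gamma> S (f D))"
  proof (cases "lam_f < 1")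
    case True
    have "lipschitz_ds (1 * lam_f) (\<lambda>D. I_S \<gamma> S (f D))"
      using stable_I_S[where S=S, OF assms(1-4), unfolded stable_def] assms(7) zero_le_one assms(5)
      by (rule lipschitz_ds_comp)
    then have "lipschitz_ds (max lam_f 0) (\<lambda>D. I_S \<gamma> S (f D))"
      by (rule lipschitz_ds_mono) simp
    then show ?thesis
      using True by (intro exI[of _ "max lam_f 0"]) simp
  next
    case False
    with assms(8) obtain f0 where "\<forall>D. posdiag D \<longrightarrow> (\<forall>i. f D $ i \<le> f0 $ i)"
      by blast
    then show ?thesis
      by (intro lipschitz_ds_I_S_comp_bounded[where S=S and f=f and f_bound=f0, OF assms(1-6)]) auto
  qed
  then obtain k where "0 \<le> k" "k < 1" "lipschitz_ds k (\<lambda>D. I_S \<gamma> S (f D))"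
    by blast
  then show ?thesis
    by (intro lipschitz_ds_contraction_unique_fixpoint[where F="\<lambda>D. I_S \<gamma> S (f D)", OF I_S_f_pos])
qed

end
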